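(* If $L\subseteq\Sigma^*$ is a Boolean combination of bounded languages, then $L\in\mathcal{L}(\mathsf{FC})$ if and only if $L\in\mathcal{L}(\mathsf{FC}[\mathsf{REG}])$.
   Context: $\Sigma$ is a fixed finite alphabet. For $w \in \Sigma^*$, $\mathsf{Facs}(w)$ is the set of all factors of $w$. The structure $\mathfrak{A}_w$ representing $w$ has universe $\mathsf{Facs}(w)\cup\{\perp\}$, a ternary relation $R_\circ=\{(x,y,z)\in\mathsf{Facs}(w)^3 : x=y\cdot z\}$, for each letter a constant interpreted as that letter if it occurs in $w$ and as $\perp$ otherwise, and a constant $\varepsilon$ interpreted as the empty word. $\mathsf{FC}$ is first-order logic over such structures, with atomic formulas $(x \mathbin{\dot=} y\cdot z)$ (meaning $R_\circ(x,y,z)$) where $x,y,z$ are variables, letters of $\Sigma$, or $\varepsilon$, closed under $\land,\lor,\neg,\exists,\forall$; quantified variables range over $\mathsf{Facs}(w)$. $\mathsf{FC}[\mathsf{REG}]$ extends $\mathsf{FC}$ with atomic regular constraints $(x \mathbin{\dot\in}\gamma)$, $\gamma$ a regular expression, which hold under an assignment $\sigma$ in $\mathfrak{A}_w$ iff $\sigma(x)$ is a factor of $w$ and $\sigma(x)\in\mathcal{L}(\gamma)$. For a sentence $\varphi$, $\mathcal{L}(\varphi)=\{w\in\Sigma^*:\mathfrak{A}_w\models\varphi\}$; $\mathcal{L}(\mathsf{FC})$ and $\mathcal{L}(\mathsf{FC}[\mathsf{REG}])$ are the classes of languages defined by sentences of the respective logics. A language $L\subseteq\Sigma^*$ is bounded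 if $L\subseteq w_1^*w_2^*\cdots w_n^*$ for some $n\in\mathbb{N}$ and $w_1,\dots,w_n\in\Sigma^*$. *)

theory Defs
  imports Main
begin

definition facs :: "'a list \<Rightarrow> 'a list set" where
  "facs w = {v. \<exists>x y. w = x @ v @ y}"

definition conc :: "'a list set \<Rightarrow> 'a list set \<Rightarrow> 'a list set" where
  "conc A B = {x @ y | x y. x \<in> A \<and> y \<in> B}"

fun lpow :: "'a list set \<Rightarrow> nat \<Rightarrow> 'a list set" where
  "lpow A 0 = {[]}"
| "lpow A (Suc n) = conc A (lpow A n)"

definition lstar :: "'a list set \<Rightarrow> 'a list set" where
  "lstar A = (\<Union>n. lpow A n)"

datatype 'a rexp = RZero | REps | RAtom 'a | RPlus "'a rexp" "'a rexp"
  | RTimes "'a rexp" "'a rexp" | RStar "'a rexp"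

fun rlang :: "'a rexp \<Rightarrow> 'a list set" where
  "rlang RZero = {}"
| "rlang REps = {[]}"
| "rlang (RAtom a) = {[a]}"
| "rlang (RPlus r s) = rlang r \<union> rlang s"
| "rlang (RTimes r s) = conc (rlang r) (rlang s)"
| "rlang (RStar r) = lstar (rlang r)"

datatype 'a fcterm = Var nat | Let 'a | Eps

datatype 'a fcform =
    Cat "'a fcterm" "'a fcterm" "'a fcterm"   (* x = y . z *)
  | Reg nat "'a rexp"
  | Neg "'a fcform"
  | Conj "'a fcform" "'a fcform"
  | Disj "'a fcform" "'a fcform"
  | Ex nat "'a fcform"
  | All nat "'a fcform"

text \<open>Elements of the structure A_w: Some v for a factor v, None for bottom.\<close>
fun tval :: "'a list \<Rightarrow> (nat \<Rightarrow> 'a list option) \<Rightarrow> 'a fcterm \<Rightarrow> 'a list option" where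
  "tval w \<sigma> (Var x) = \<sigma> x"
| "tval w \<sigma> (Let a) = (if a \<in> set w then Some [a] else None)"
| "tval w \<sigma> Eps = Some []"

fun sat :: "'a list \<Rightarrow> (nat \<Rightarrow> 'a list option) \<Rightarrow> 'a fcform \<Rightarrow> bool" where
  "sat w \<sigma> (Cat x y z) =
     (\<exists>u v t. tval w \<sigma> x = Some u \<and> tval w \<sigma> y = Some v \<and> tval w \<sigma> z = Some t
        \<and> u \<in> facs w \<and> v \<in> facs w \<and> t \<in> facs w \<and> u = v @ t)"
| "sat w \<sigma> (Reg x r) = (\<exists>u. \<sigma> x = Some u \<and> u \<in> facs w \<and> u \<in> rlang r)"
| "sat w \<sigma> (Neg \<phi>) = (\<not> sat w \<sigma> \<phi>)"
| "sat w \<sigma> (Conj \<phi> \<psi>) = (sat w \<sigma> \<phi> \<and> sat w \<sigma> \<psi>)"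
| "sat w \<sigma> (Disj \<phi> \<psi>) = (sat w \<sigma> \<phi> \<or> sat w \<sigma> \<psi>)"
| "sat w \<sigma> (Ex x \<phi>) = (\<exists>u\<in>facs w. sat w (\<sigma>(x := Some u)) \<phi>)"
| "sat w \<sigma> (All x \<phi>) = (\<forall>u\<in>facs w. sat w (\<sigma>(x := Some u)) \<phi>)"

fun tvars :: "'a fcterm \<Rightarrow> nat set" where
  "tvars (Var x) = {x}"
| "tvars (Let a) = {}"
| "tvars Eps = {}"

fun fv :: "'a fcform \<Rightarrow> nat set" where
  "fv (Cat x y z) = tvars x \<union> tvars y \<union> tvars z"
| "fv (Reg x r) = {x}"
| "fv (Neg \<phi>) = fv \<phi>"
| "fv (Conj \<phi> \<psi>) = fv \<phi> \<union> fv \<psi>"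
| "fv (Disj \<phi> \<psi>) = fv \<phi> \<union> fv \<psi>"
| "fv (Ex x \<phi>) = fv \<phi> - {x}"
| "fv (All x \<phi>) = fv \<phi> - {x}"

fun pure_fc :: "'a fcform \<Rightarrow> bool" where
  "pure_fc (Cat x y z) = True"
| "pure_fc (Reg x r) = False"
| "pure_fc (Neg \<phi>) = pure_fc \<phi>"
| "pure_fc (Conj \<phi> \<psi>) = (pure_fc \<phi> \<and> pure_fc \<psi>)"
| "pure_fc (Disj \<phi> \<psi>) = (pure_fc \<phi> \<and> pure_fc \<psi>)"
| "pure_fc (Ex x \<phi>) = pure_fc \<phi>"
| "pure_fc (All x \<phi>) = pure_fc \<phi>"

text \<open>Language of a sentence (the assignment is irrelevant for sentences; we fix bottom).\<close>
definition flang :: "'a fcform \<Rightarrow> 'a list set" where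
  "flang \<phi> = {w. sat w (\<lambda>_. None) \<phi>}"

definition FC_definable :: "('a::finite) list set \<Rightarrow> bool" where
  "FC_definable L \<longleftrightarrow> (\<exists>\<phi>. fv \<phi> = {} \<and> pure_fc \<phi> \<and> L = flang \<phi>)"

definition FCREG_definable :: "('a::finite) list set \<Rightarrow> bool" where
  "FCREG_definable L \<longleftrightarrow> (\<exists>\<phi>. fv \<phi> = {} \<and> L = flang \<phi>)"

definition wstar :: "'a list \<Rightarrow> 'a list set" where
  "wstar u = {concat (replicate k u) | k. True}"

definition bounded_lang :: "'a list set \<Rightarrow> bool" where
  "bounded_lang L \<longleftrightarrow> (\<exists>ws. L \<subseteq> foldr (\<lambda>u A. conc (wstar u) A) ws {[]})"

inductive bool_comb_bounded :: "'a list set \<Rightarrow> bool" where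
  base: "bounded_lang L \<Longrightarrow> bool_comb_bounded L"
| compl: "bool_comb_bounded L \<Longrightarrow> bool_comb_bounded (- L)"
| union: "bool_comb_bounded A \<Longrightarrow> bool_comb_bounded B \<Longrightarrow> bool_comb_bounded (A \<union> B)"
| inter: "bool_comb_bounded A \<Longrightarrow> bool_comb_bounded B \<Longrightarrow> bool_comb_bounded (A \<inter> B)"

end

theory Submission
  imports Defs "HOL-Library.Sublist"
begin

text \<open>Every FC sentence is an FC[REG] sentence. For the converse it suffices, after complementing,
  to treat a bounded language \<open>L \<subseteq> w\<^sub>1\<^sup>* \<cdots> w\<^sub>n\<^sup>*\<close>. All factors of words in
  \<open>w\<^sub>1\<^sup>* \<cdots> w\<^sub>n\<^sup>*\<close> lie in another product of stars D, and for every regular R the set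
  \<open>D \<inter> R\<close> is definable by a pure FC formula in one free variable: \<open>u\<^sup>* \<inter> R\<close> is a finite union of
  singletons \<open>{u\<^sup>k}\<close> and of sets \<open>u\<^sup>N (u\<^sup>c)\<^sup>*\<close> because the left quotients of R by the powers
  of u are eventually periodic; \<open>(r\<^sup>e)\<^sup>*\<close> with r primitive consists of the e-th powers of the
  words y with \<open>y = r z = z r\<close>; and a product of stars is split along the finitely many left
  quotients of R. Replacing each regular constraint by such a formula does not change the
  meaning on words whose factors lie in D, and intersecting with the FC-definable language
  \<open>w\<^sub>1\<^sup>* \<cdots> w\<^sub>n\<^sup>*\<close> gives an FC sentence for L.\<close>

lemma facs_iff_sublist: "u \<in> facs w \<longleftrightarrow> sublist u w"
  by (simp add: facs_def sublist_def)

lemma facs_self [simp]: "w \<in> facs w"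
  by (simp add: facs_iff_sublist)

lemma Nil_in_facs [simp]: "[] \<in> facs w"
  by (simp add: facs_iff_sublist)

lemma facs_appendD: "p @ y \<in> facs w \<Longrightarrow> p \<in> facs w \<and> y \<in> facs w"
  unfolding facs_iff_sublist by (metis sublist_append_leftI sublist_append_rightI sublist_order.order_trans)

lemma singleton_in_facs_iff: "[a] \<in> facs w \<longleftrightarrow> a \<in> set w"
  unfolding facs_def by (auto simp: in_set_conv_decomp)

lemma concI: "x \<in> A \<Longrightarrow> y \<in> B \<Longrightarrow> x @ y \<in> conc A B"
  unfolding conc_def by blast

lemma conc_assoc: "conc (conc A B) C = conc A (conc B C)"
  unfolding conc_def by (auto, metis append.assoc, metis append.assoc)

lemma conc_Nil_left [simp]: "conc {[]} A = A"
  unfolding conc_def by auto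

definition fc_defines :: "'a fcform \<Rightarrow> nat \<Rightarrow> 'a list set \<Rightarrow> bool" where
  "fc_defines \<psi> x S \<longleftrightarrow> pure_fc \<psi> \<and> fv \<psi> \<subseteq> {x} \<and>
     (\<forall>w \<sigma> u. \<sigma> x = Some u \<longrightarrow> u \<in> facs w \<longrightarrow> sat w \<sigma> \<psi> = (u \<in> S))"

text \<open>Quantifying over the free variable lets composite formulas bind the fresh variables
  \<open>Suc x\<close>, \<open>Suc (Suc x)\<close>, \<dots> of their components.\<close>
definition FC_unary_definable :: "'a list set \<Rightarrow> bool" where
  "FC_unary_definable S \<longleftrightarrow> (\<forall>x. \<exists>\<psi>. fc_defines \<psi> x S)"

lemma fc_definesD:
  "fc_defines \<psi> x S \<Longrightarrow> \<sigma> x = Some u \<Longrightarrow> u \<in> facs w \<Longrightarrow> sat w \<sigma> \<psi> = (u \<in> S)"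
  unfolding fc_defines_def by blast

lemma FC_unary_definable_Un:
  "FC_unary_definable S \<Longrightarrow> FC_unary_definable T \<Longrightarrow> FC_unary_definable (S \<union> T)"
  unfolding FC_unary_definable_def
proof
  fix x
  assume "\<forall>x. \<exists>\<psi>. fc_defines \<psi> x S" "\<forall>x. \<exists>\<psi>. fc_defines \<psi> x T"
  then obtain \<psi> \<chi> where "fc_defines \<psi> x S" "fc_defines \<chi> x T" by blast
  then have "fc_defines (Disj \<psi> \<chi>) x (S \<union> T)" by (auto simp: fc_defines_def)
  then show "\<exists>\<psi>. fc_defines \<psi> x (S \<union> T)" ..
qed

lemma FC_unary_definable_empty: "FC_unary_definable {}"
proof -
  have "fc_defines (Neg (Cat Eps Eps Eps)) x {}" for x :: nat
    by (simp add: fc_defines_def)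
  then show ?thesis unfolding FC_unary_definable_def by blast
qed

lemma FC_unary_definable_UN:
  "finite I \<Longrightarrow> (\<And>i. i \<in> I \<Longrightarrow> FC_unary_definable (S i)) \<Longrightarrow> FC_unary_definable (\<Union>i\<in>I. S i)"
  by (induction I rule: finite_induct) (simp_all add: FC_unary_definable_empty FC_unary_definable_Un)

lemma FC_unary_definable_conc:
  assumes "FC_unary_definable A" "FC_unary_definable B"
  shows "FC_unary_definable (conc A B)"
  unfolding FC_unary_definable_def
proof
  fix x
  obtain a b where a: "fc_defines a (Suc x) A" and b: "fc_defines b (Suc (Suc x)) B"
    using assms unfolding FC_unary_definable_def by blast
  let ?\<psi> = "Ex (Suc x) (Ex (Suc (Suc x)) (Conj (Cat (Var x) (Var (Suc x)) (Var (Suc (Suc x)))) (Conj a b)))"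
  have "fc_defines ?\<psi> x (conc A B)"
    unfolding fc_defines_def
  proof (intro conjI allI impI)
    show "pure_fc ?\<psi>" "fv ?\<psi> \<subseteq> {x}" using a b by (auto simp: fc_defines_def)
    fix w :: "'a list" and \<sigma> u
    assume u: "\<sigma> x = Some u" "u \<in> facs w"
    have "sat w \<sigma> ?\<psi> \<longleftrightarrow> (\<exists>p\<in>facs w. \<exists>y\<in>facs w. u = p @ y \<and> p \<in> A \<and> y \<in> B)"
      using u by (simp add: fc_definesD[OF a] fc_definesD[OF b])
    also have "\<dots> \<longleftrightarrow> u \<in> conc A B"
      using u(2) unfolding conc_def by (blast dest: facs_appendD)
    finally show "sat w \<sigma> ?\<psi> = (u \<in> conc A B)" .
  qed
  then show "\<exists>\<psi>. fc_defines \<psi> x (conc A B)" ..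
qed

lemma FC_unary_definable_Nil: "FC_unary_definable {[]}"
proof -
  have "fc_defines (Cat (Var x) Eps Eps) x {[]}" for x :: nat
    by (auto simp: fc_defines_def)
  then show ?thesis unfolding FC_unary_definable_def by blast
qed

lemma FC_unary_definable_letter: "FC_unary_definable {[a]}"
proof -
  have "fc_defines (Cat (Var x) (Let a) Eps) x {[a]}" for x :: nat
    by (auto simp: fc_defines_def singleton_in_facs_iff)
  then show ?thesis unfolding FC_unary_definable_def by blast
qed

lemma FC_unary_definable_singleton: "FC_unary_definable {s}"
proof (induction s)
  case Nil
  show ?case by (rule FC_unary_definable_Nil)
next
  case (Cons a s)
  have "{a # s} = conc {[a]} {s}" by (simp add: conc_def)
  then show ?case using FC_unary_definable_conc[OF FC_unary_definable_letter Cons] by simp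
qed

section \<open>Powers and primitive words\<close>

abbreviation wpow :: "'a list \<Rightarrow> nat \<Rightarrow> 'a list" where
  "wpow u k \<equiv> concat (replicate k u)"

lemma wpow_mult: "wpow (wpow t i) j = wpow t (i * j)"
  by (induction j) (simp_all add: replicate_add)

lemma wpow_Suc_right: "wpow t (Suc k) = wpow t k @ t"
  using replicate_add[of k 1 t] by simp

lemma wstar_iff: "z \<in> wstar u \<longleftrightarrow> (\<exists>k. z = wpow u k)"
  unfolding wstar_def by blast

lemma Nil_in_wstar: "[] \<in> wstar w"
  unfolding wstar_iff by (auto intro: exI[of _ 0])

lemma wpow_formula:
  assumes "x \<noteq> y"
  shows "\<exists>\<psi>. pure_fc \<psi> \<and> fv \<psi> \<subseteq> {x, y} \<and>
    (\<forall>w \<sigma> u v. \<sigma> x = Some u \<longrightarrow> \<sigma> y = Some v \<longrightarrow> u \<in> facs w \<longrightarrow> v \<in> facs w \<longrightarrow>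
       sat w \<sigma> \<psi> = (u = wpow v (Suc n)))"
  using assms
proof (induction n arbitrary: x)
  case 0
  show ?case
    by (rule exI[of _ "Cat (Var x) (Var y) Eps"]) simp
next
  case (Suc n)
  define t where "t = x + y + 1"
  have t: "t \<noteq> x" "t \<noteq> y" unfolding t_def by auto
  obtain q :: "'a fcform" where q: "pure_fc q" "fv q \<subseteq> {t, y}" and
    q_sat: "\<And>w \<sigma> u v. \<sigma> t = Some u \<Longrightarrow> \<sigma> y = Some v \<Longrightarrow> u \<in> facs w \<Longrightarrow> v \<in> facs w \<Longrightarrow>
       sat w \<sigma> q = (u = wpow v (Suc n))"
    using Suc.IH[OF t(2)] by metis
  let ?\<psi> = "Ex t (Conj (Cat (Var x) (Var y) (Var t)) q)"
  show ?case
  proof (rule exI[of _ ?\<psi>], intro conjI allI impI)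
    show "pure_fc ?\<psi>" "fv ?\<psi> \<subseteq> {x, y}" using q by auto
    fix w :: "'a list" and \<sigma> u v
    assume u: "\<sigma> x = Some u" "\<sigma> y = Some v" "u \<in> facs w" "v \<in> facs w"
    have "sat w \<sigma> ?\<psi> \<longleftrightarrow> (\<exists>c\<in>facs w. u = v @ c \<and> c = wpow v (Suc n))"
      using u t Suc.prems by (simp add: q_sat)
    also have "\<dots> \<longleftrightarrow> u = v @ wpow v (Suc n)"
      using u(3) facs_appendD by blast
    finally show "sat w \<sigma> ?\<psi> = (u = wpow v (Suc (Suc n)))" by simp
  qed
qed

lemma FC_unary_definable_wpow_image:
  assumes "FC_unary_definable C" "0 < e"
  shows "FC_unary_definable ((\<lambda>y. wpow y e) ` C)"
proof -
  obtain n where e: "e = Suc n" using assms(2) gr0_conv_Suc by blast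
  have "\<exists>\<psi>. fc_defines \<psi> x ((\<lambda>y. wpow y (Suc n)) ` C)" for x
  proof -
    from wpow_formula[OF n_not_Suc_n, of x n] obtain p :: "'a fcform" where p: "pure_fc p" "fv p \<subseteq> {x, Suc x}" and
      p_sat: "\<forall>w \<sigma> u v. \<sigma> x = Some u \<longrightarrow> \<sigma> (Suc x) = Some v \<longrightarrow> u \<in> facs w \<longrightarrow> v \<in> facs w \<longrightarrow>
         sat w \<sigma> p = (u = wpow v (Suc n))"
      by blast
    obtain c where c: "fc_defines c (Suc x) C"
      using assms(1) unfolding FC_unary_definable_def by blast
    let ?\<psi> = "Ex (Suc x) (Conj p c)"
    have "fc_defines ?\<psi> x ((\<lambda>y. wpow y (Suc n)) ` C)"
      unfolding fc_defines_def
    proof (intro conjI allI impI)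
      show "pure_fc ?\<psi>" "fv ?\<psi> \<subseteq> {x}" using p c by (auto simp: fc_defines_def)
      fix w :: "'a list" and \<sigma> u
      assume u: "\<sigma> x = Some u" "u \<in> facs w"
      have "sat w \<sigma> ?\<psi> \<longleftrightarrow> (\<exists>v\<in>facs w. u = v @ wpow v n \<and> v \<in> C)"
        using u by (simp add: p_sat fc_definesD[OF c])
      also have "\<dots> \<longleftrightarrow> (\<exists>v\<in>C. u = v @ wpow v n)"
        using u(2) facs_appendD by blast
      finally show "sat w \<sigma> ?\<psi> = (u \<in> (\<lambda>y. wpow y (Suc n)) ` C)" by auto
    qed
    then show ?thesis ..
  qed
  then show ?thesis unfolding e FC_unary_definable_def by blast
qed

lemma FC_unary_definable_comm_append: "FC_unary_definable {y. \<exists>z. y = r @ z \<and> y = z @ r}"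
  unfolding FC_unary_definable_def
proof
  fix x
  obtain \<rho> where \<rho>: "fc_defines \<rho> (Suc x) {r}"
    using FC_unary_definable_singleton unfolding FC_unary_definable_def by blast
  let ?c = "Conj (Cat (Var x) (Var (Suc x)) (Var (Suc (Suc x)))) (Cat (Var x) (Var (Suc (Suc x))) (Var (Suc x)))"
  let ?\<psi> = "Ex (Suc x) (Conj \<rho> (Ex (Suc (Suc x)) ?c))"
  have "fc_defines ?\<psi> x {y. \<exists>z. y = r @ z \<and> y = z @ r}"
    unfolding fc_defines_def
  proof (intro conjI allI impI)
    show "pure_fc ?\<psi>" "fv ?\<psi> \<subseteq> {x}" using \<rho> by (auto simp: fc_defines_def)
    fix w :: "'a list" and \<sigma> u
    assume u: "\<sigma> x = Some u" "u \<in> facs w"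
    have "sat w \<sigma> ?\<psi> \<longleftrightarrow> (\<exists>g\<in>facs w. g = r \<and> (\<exists>z\<in>facs w. u = g @ z \<and> u = z @ g))"
      using u by (simp add: fc_definesD[OF \<rho>])
    also have "\<dots> \<longleftrightarrow> u \<in> {y. \<exists>z. y = r @ z \<and> y = z @ r}"
      using u(2) facs_appendD by blast
    finally show "sat w \<sigma> ?\<psi> = (u \<in> {y. \<exists>z. y = r @ z \<and> y = z @ r})" .
  qed
  then show "\<exists>\<psi>. fc_defines \<psi> x {y. \<exists>z. y = r @ z \<and> y = z @ r}" ..
qed

definition primitive :: "'a list \<Rightarrow> bool" where
  "primitive r \<longleftrightarrow> r \<noteq> [] \<and> (\<forall>t k. r = wpow t k \<longrightarrow> k = 1)"

lemma primitive_root: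
  assumes "u \<noteq> []"
  shows "\<exists>r e. primitive r \<and> 0 < e \<and> u = wpow r e"
  using assms
proof (induction "length u" arbitrary: u rule: less_induct)
  case less
  show ?case
  proof (cases "primitive u")
    case True
    then show ?thesis by (intro exI[of _ u] exI[of _ 1]) simp
  next
    case False
    then obtain t k where tk: "u = wpow t k" "k \<noteq> 1"
      using less.prems unfolding primitive_def by blast
    then have "t \<noteq> []" "2 \<le> k" using less.prems by (auto intro: Nat.gr0I)
    then have "length t < length u" using tk(1) by (simp add: length_concat sum_list_replicate)
    then obtain r e where "primitive r" "0 < e" "t = wpow r e"
      using less.hyps \<open>t \<noteq> []\<close> by blast
    then show ?thesis using tk \<open>2 \<le> k\<close> by (intro exI[of _ r] exI[of _ "e * k"]) (simp add: wpow_mult)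
  qed
qed

lemma comm_append_primitive:
  assumes "primitive r" "z @ r = r @ z"
  shows "\<exists>m. z = wpow r m"
proof -
  obtain m n t where "wpow t m = z" "wpow t n = r"
    using comm_append_are_replicate[OF assms(2)] by blast
  moreover have "n = 1" using assms(1) \<open>wpow t n = r\<close> unfolding primitive_def by blast
  ultimately show ?thesis by auto
qed

text \<open>A word commuting with a primitive word r is a power of r, so the set below is exactly
  \<open>r\<^sup>+\<close>; this expresses membership in \<open>(r\<^sup>e)\<^sup>*\<close> without iteration.\<close>
lemma wstar_wpow_primitive:
  assumes "primitive r" "0 < e"
  shows "wstar (wpow r e) = insert [] ((\<lambda>y. wpow y e) ` {y. \<exists>z. y = r @ z \<and> y = z @ r})"
proof (intro set_eqI iffI)
  fix x
  assume "x \<in> wstar (wpow r e)"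
  then obtain k where x: "x = wpow (wpow r e) k" unfolding wstar_iff by blast
  show "x \<in> insert [] ((\<lambda>y. wpow y e) ` {y. \<exists>z. y = r @ z \<and> y = z @ r})"
  proof (cases k)
    case 0
    then show ?thesis using x by simp
  next
    case (Suc k')
    have "x = wpow (wpow r k) e" using x by (simp add: wpow_mult mult.commute)
    moreover have "wpow r k = r @ wpow r k'" "wpow r k = wpow r k' @ r"
      using Suc wpow_Suc_right by auto
    ultimately show ?thesis by blast
  qed
next
  fix x
  assume "x \<in> insert [] ((\<lambda>y. wpow y e) ` {y. \<exists>z. y = r @ z \<and> y = z @ r})"
  then consider "x = []" | z where "x = wpow (r @ z) e" "r @ z = z @ r" by auto
  then show "x \<in> wstar (wpow r e)"
  proof cases
    case 1
    then show ?thesis unfolding wstar_iff by (intro exI[of _ 0]) simp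
  next
    case 2
    then obtain m where "z = wpow r m" using comm_append_primitive[OF assms(1)] by metis
    then have "r @ z = wpow r (Suc m)" by simp
    then have "x = wpow (wpow r e) (Suc m)" using 2(1) by (metis wpow_mult mult.commute)
    then show ?thesis unfolding wstar_iff by blast
  qed
qed

lemma FC_unary_definable_wstar: "FC_unary_definable (wstar u)"
proof (cases "u = []")
  case True
  then have "wstar u = {[]}" by (auto simp: wstar_iff)
  then show ?thesis using FC_unary_definable_singleton by simp
next
  case False
  then obtain r e where r: "primitive r" "0 < e" "u = wpow r e" using primitive_root by blast
  have "FC_unary_definable (insert [] ((\<lambda>y. wpow y e) ` {y. \<exists>z. y = r @ z \<and> y = z @ r}))"
    using FC_unary_definable_Un[OF FC_unary_definable_singleton
        FC_unary_definable_wpow_image[OF FC_unary_definable_comm_append r(2)]] by simp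
  then show ?thesis using wstar_wpow_primitive[OF r(1,2)] r(3) by simp
qed

section \<open>Left quotients of regular languages\<close>

definition lquot :: "'a list \<Rightarrow> 'a list set \<Rightarrow> 'a list set" where
  "lquot u L = {v. u @ v \<in> L}"

definition finite_quotients :: "'a list set \<Rightarrow> bool" where
  "finite_quotients L \<longleftrightarrow> finite (range (\<lambda>u. lquot u L))"

lemma lquot_append: "lquot (u @ v) L = lquot v (lquot u L)"
  by (simp add: lquot_def)

lemma lquot_Nil [simp]: "lquot [] L = L"
  by (simp add: lquot_def)

lemma finite_quotientsI:
  assumes "\<And>u. lquot u L = F (k u)" "\<And>u. k u \<in> K" "finite K"
  shows "finite_quotients L"
proof -
  have "range (\<lambda>u. lquot u L) \<subseteq> F ` K" using assms(1,2) by auto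
  then show ?thesis unfolding finite_quotients_def using assms(3) finite_surj by blast
qed

lemma finite_quotients_lquot: "finite_quotients L \<Longrightarrow> finite_quotients (lquot u L)"
  unfolding finite_quotients_def
  by (rule finite_subset[rotated]) (auto simp: lquot_append[symmetric])

lemma finite_quotients_lquot_eq:
  assumes "finite_quotients L"
  shows "finite_quotients {p. lquot p L = Q}"
proof (rule finite_quotientsI[where F = "\<lambda>X. {p. lquot p X = Q}" and k = "\<lambda>u. lquot u L"])
  show "lquot u {p. lquot p L = Q} = {p. lquot p (lquot u L) = Q}" for u
    by (simp add: lquot_def lquot_append[symmetric])
qed (use assms in \<open>auto simp: finite_quotients_def\<close>)

lemma finite_quotients_finite:
  assumes "finite L"
  shows "finite_quotients L"
proof -
  have "lquot u L \<in> insert {} ((\<lambda>u. lquot u L) ` (\<Union>w\<in>L. set (prefixes w)))" for u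
  proof (cases "lquot u L = {}")
    case False
    then obtain v where "u @ v \<in> L" unfolding lquot_def by blast
    then show ?thesis by force
  qed simp
  then show ?thesis
    unfolding finite_quotients_def using assms by (blast intro: finite_subset)
qed

lemma finite_quotients_Un:
  assumes "finite_quotients A" "finite_quotients B"
  shows "finite_quotients (A \<union> B)"
  by (rule finite_quotientsI[where F = "\<lambda>(X, Y). X \<union> Y" and k = "\<lambda>u. (lquot u A, lquot u B)"
        and K = "range (\<lambda>u. lquot u A) \<times> range (\<lambda>u. lquot u B)"])
    (use assms in \<open>auto simp: finite_quotients_def lquot_def\<close>)

lemma lquot_conc:
  "lquot u (conc A B) = conc (lquot u A) B \<union> \<Union>{lquot u2 B | u1 u2. u = u1 @ u2 \<and> u1 \<in> A}"
proof (intro set_eqI iffI)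
  fix v
  assume "v \<in> lquot u (conc A B)"
  then obtain a b us where "a \<in> A" "b \<in> B" "u = a @ us \<and> us @ v = b \<or> u @ us = a \<and> v = us @ b"
    by (auto simp: lquot_def conc_def append_eq_append_conv2)
  then show "v \<in> conc (lquot u A) B \<union> \<Union>{lquot u2 B | u1 u2. u = u1 @ u2 \<and> u1 \<in> A}"
  proof (elim disjE conjE)
    assume "u = a @ us" "us @ v = b"
    then have "v \<in> lquot us B" "lquot us B \<in> {lquot u2 B | u1 u2. u = u1 @ u2 \<and> u1 \<in> A}"
      using \<open>a \<in> A\<close> \<open>b \<in> B\<close> by (auto simp: lquot_def)
    then show ?thesis by blast
  next
    assume "u @ us = a" "v = us @ b"
    then show ?thesis using \<open>a \<in> A\<close> \<open>b \<in> B\<close> by (auto simp: lquot_def conc_def)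
  qed
next
  fix v
  assume "v \<in> conc (lquot u A) B \<union> \<Union>{lquot u2 B | u1 u2. u = u1 @ u2 \<and> u1 \<in> A}"
  then consider "v \<in> conc (lquot u A) B" | u1 u2 where "u = u1 @ u2" "u1 \<in> A" "u2 @ v \<in> B"
    by (auto simp: lquot_def)
  then show "v \<in> lquot u (conc A B)"
  proof cases
    case 1
    then obtain x y where "v = x @ y" "u @ x \<in> A" "y \<in> B" by (auto simp: lquot_def conc_def)
    then have "(u @ x) @ y \<in> conc A B" by (intro concI)
    then show ?thesis using \<open>v = x @ y\<close> by (simp add: lquot_def)
  next
    case 2
    then have "u1 @ (u2 @ v) \<in> conc A B" by (intro concI)
    then show ?thesis using 2 by (simp add: lquot_def)
  qed
qed

lemma finite_quotients_conc:
  assumes "finite_quotients A" "finite_quotients B"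
  shows "finite_quotients (conc A B)"
  by (rule finite_quotientsI[where F = "\<lambda>(X, S). conc X B \<union> \<Union>S"
        and k = "\<lambda>u. (lquot u A, {lquot u2 B | u1 u2. u = u1 @ u2 \<and> u1 \<in> A})"
        and K = "range (\<lambda>u. lquot u A) \<times> Pow (range (\<lambda>u. lquot u B))"])
    (use assms in \<open>auto simp: finite_quotients_def lquot_conc\<close>)

lemma lpow_subset_lstar: "lpow A n \<subseteq> lstar A"
  unfolding lstar_def by blast

lemma Nil_in_lstar: "[] \<in> lstar A"
  using lpow_subset_lstar[of A 0] by simp

lemma lstar_append_closed_left: "a \<in> A \<Longrightarrow> x \<in> lstar A \<Longrightarrow> a @ x \<in> lstar A"
proof -
  assume "a \<in> A" "x \<in> lstar A"
  then obtain n where "x \<in> lpow A n" unfolding lstar_def by blast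
  then have "a @ x \<in> lpow A (Suc n)" using \<open>a \<in> A\<close> by (auto simp: conc_def)
  then show ?thesis using lpow_subset_lstar by blast
qed

lemma lstar_append_closed: "x \<in> lstar A \<Longrightarrow> y \<in> lstar A \<Longrightarrow> x @ y \<in> lstar A"
proof -
  assume "x \<in> lstar A" "y \<in> lstar A"
  then obtain n where "x \<in> lpow A n" unfolding lstar_def by blast
  then show ?thesis
  proof (induction n arbitrary: x)
    case 0
    then show ?case using \<open>y \<in> lstar A\<close> by simp
  next
    case (Suc n)
    then obtain a x' where "x = a @ x'" "a \<in> A" "x' \<in> lpow A n" by (auto simp: conc_def)
    then show ?case using Suc.IH lstar_append_closed_left by fastforce
  qed
qed

text \<open>A word of \<open>A\<^sup>n\<close> with a nonempty prefix u splits at the factor of A in which u ends.\<close>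
lemma lpow_append_split:
  "u \<noteq> [] \<Longrightarrow> u @ v \<in> lpow A n \<Longrightarrow>
   \<exists>u1 u2 v1 v2. u = u1 @ u2 \<and> u1 \<in> lstar A \<and> u2 \<noteq> [] \<and> u2 @ v1 \<in> A \<and> v2 \<in> lstar A \<and> v = v1 @ v2"
proof (induction n arbitrary: u v)
  case 0
  then show ?case by simp
next
  case (Suc n)
  then obtain a x where ax: "u @ v = a @ x" "a \<in> A" "x \<in> lpow A n" by (auto simp: conc_def)
  then obtain us where "u = a @ us \<and> us @ v = x \<or> u @ us = a \<and> v = us @ x"
    by (auto simp: append_eq_append_conv2)
  then consider "u = a @ us" "us @ v = x" "us = []" | "u = a @ us" "us @ v = x" "us \<noteq> []"
    | "u @ us = a" "v = us @ x"
    by blast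
  then show ?case
  proof cases
    case 1
    then show ?thesis using ax Suc.prems lpow_subset_lstar Nil_in_lstar
      by (intro exI[of _ "[]"] exI[of _ a] exI[of _ "[]"] exI[of _ v]) auto
  next
    case 2
    then obtain u1 u2 v1 v2 where
      "us = u1 @ u2" "u1 \<in> lstar A" "u2 \<noteq> []" "u2 @ v1 \<in> A" "v2 \<in> lstar A" "v = v1 @ v2"
      using Suc.IH ax(3) by blast
    then show ?thesis using 2 ax lstar_append_closed_left
      by (intro exI[of _ "a @ u1"] exI[of _ u2] exI[of _ v1] exI[of _ v2]) auto
  next
    case 3
    then show ?thesis using ax Suc.prems lpow_subset_lstar Nil_in_lstar
      by (intro exI[of _ "[]"] exI[of _ u] exI[of _ us] exI[of _ x]) auto
  qed
qed

lemma lquot_lstar: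
  assumes "u \<noteq> []"
  shows "lquot u (lstar A) =
    \<Union>{conc (lquot u2 A) (lstar A) | u1 u2. u = u1 @ u2 \<and> u1 \<in> lstar A \<and> u2 \<noteq> []}"
proof (intro set_eqI iffI)
  fix v
  assume "v \<in> lquot u (lstar A)"
  then obtain n where "u @ v \<in> lpow A n" unfolding lquot_def lstar_def by blast
  from lpow_append_split[OF assms this] obtain u1 u2 v1 v2 where
    "u = u1 @ u2" "u1 \<in> lstar A" "u2 \<noteq> []" "u2 @ v1 \<in> A" "v2 \<in> lstar A" "v = v1 @ v2"
    by blast
  then show "v \<in> \<Union>{conc (lquot u2 A) (lstar A) | u1 u2. u = u1 @ u2 \<and> u1 \<in> lstar A \<and> u2 \<noteq> []}"
    by (auto simp: lquot_def conc_def)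
next
  fix v
  assume "v \<in> \<Union>{conc (lquot u2 A) (lstar A) | u1 u2. u = u1 @ u2 \<and> u1 \<in> lstar A \<and> u2 \<noteq> []}"
  then obtain u1 u2 v1 v2 where
    "u = u1 @ u2" "u1 \<in> lstar A" "u2 @ v1 \<in> A" "v2 \<in> lstar A" "v = v1 @ v2"
    by (auto simp: lquot_def conc_def)
  then show "v \<in> lquot u (lstar A)"
    unfolding lquot_def
    using lstar_append_closed lstar_append_closed_left by (metis CollectI append.assoc)
qed

lemma finite_quotients_lstar:
  assumes "finite_quotients A"
  shows "finite_quotients (lstar A)"
proof (rule finite_quotientsI[where F = "\<lambda>(b, S). if b then lstar A else \<Union>S"
      and k = "\<lambda>u. (u = [], {conc (lquot u2 A) (lstar A) | u1 u2. u = u1 @ u2 \<and> u1 \<in> lstar A \<and> u2 \<noteq> []})"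
      and K = "UNIV \<times> Pow ((\<lambda>X. conc X (lstar A)) ` range (\<lambda>u. lquot u A))"])
  show "lquot u (lstar A) =
      (case (u = [], {conc (lquot u2 A) (lstar A) | u1 u2. u = u1 @ u2 \<and> u1 \<in> lstar A \<and> u2 \<noteq> []}) of
        (b, S) \<Rightarrow> if b then lstar A else \<Union>S)" for u
    by (cases "u = []") (simp_all add: lquot_lstar)
qed (use assms in \<open>auto simp: finite_quotients_def\<close>)

lemma finite_quotients_rlang: "finite_quotients (rlang r)"
  by (induction r)
    (simp_all add: finite_quotients_finite finite_quotients_Un finite_quotients_conc finite_quotients_lstar)

lemma iterate_eventually_periodic:
  fixes f :: "nat \<Rightarrow> 'b"
  assumes "finite (range f)" "\<And>k. f (Suc k) = g (f k)"
  obtains N c where "0 < c" "\<And>k q. f (N + k + q * c) = f (N + k)"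
proof -
  have "\<not> inj f" using assms(1) finite_imageD by fastforce
  then obtain i j where "i < j" "f i = f j"
    unfolding inj_def by (metis linorder_neqE_nat)
  define c where "c = j - i"
  have shift: "f (i + k + c) = f (i + k)" for k
  proof (induction k)
    case 0
    then show ?case using \<open>i < j\<close> \<open>f i = f j\<close> by (simp add: c_def)
  next
    case (Suc k)
    then show ?case using assms(2) by (metis add_Suc_right add_Suc)
  qed
  have "f (i + k + q * c) = f (i + k)" for k q
  proof (induction q)
    case (Suc q)
    have "f (i + k + Suc q * c) = f (i + (k + q * c) + c)" by (simp add: algebra_simps)
    also have "\<dots> = f (i + k + q * c)" by (metis shift add.assoc)
    finally show ?case using Suc.IH by simp
  qed simp
  moreover have "0 < c" using \<open>i < j\<close> by (simp add: c_def)
  ultimately show thesis by (rule that[rotated])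
qed

lemma wpow_add: "wpow v (a + b) = wpow v a @ wpow v b"
  by (simp add: replicate_add)

lemma wstar_Int_eventually_periodic:
  assumes "0 < c" and periodic: "\<And>k q. wpow v (N + k + q * c) \<in> P \<longleftrightarrow> wpow v (N + k) \<in> P"
  shows "wstar v \<inter> P = (\<Union>k\<in>{k. k < N \<and> wpow v k \<in> P}. {wpow v k}) \<union>
    (\<Union>k\<in>{k. k < c \<and> wpow v (N + k) \<in> P}. conc {wpow v (N + k)} (wstar (wpow v c)))"
    (is "_ = ?head \<union> ?tail")
proof (intro set_eqI iffI)
  fix x
  assume "x \<in> wstar v \<inter> P"
  then obtain m where x: "x = wpow v m" "wpow v m \<in> P" by (auto simp: wstar_iff)
  show "x \<in> ?head \<union> ?tail"
  proof (cases "m < N")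
    case True
    then show ?thesis using x by blast
  next
    case False
    define k q where "k = (m - N) mod c" and "q = (m - N) div c"
    have m: "m = N + k + q * c" using False unfolding k_def q_def by simp
    have "k < c" unfolding k_def using \<open>0 < c\<close> by simp
    moreover have "wpow v (N + k) \<in> P" using x(2) periodic m by metis
    moreover have "x = wpow v (N + k) @ wpow (wpow v c) q"
      using x(1) m by (simp only: wpow_add wpow_mult mult.commute)
    moreover have "wpow (wpow v c) q \<in> wstar (wpow v c)" unfolding wstar_iff by blast
    ultimately show ?thesis by (blast intro: concI)
  qed
next
  fix x
  assume "x \<in> ?head \<union> ?tail"
  then consider "x \<in> ?head"
    | k q where "k < c" "wpow v (N + k) \<in> P" "x = wpow v (N + k) @ wpow (wpow v c) q"
    by (auto simp: conc_def wstar_iff)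
  then show "x \<in> wstar v \<inter> P"
  proof cases
    case 1
    then show ?thesis by (auto simp: wstar_iff)
  next
    case 2
    then have "x = wpow v (N + k + q * c)" by (simp only: wpow_add wpow_mult mult.commute)
    then show ?thesis using 2(2) periodic by (auto simp: wstar_iff)
  qed
qed

lemma FC_unary_definable_wstar_Int:
  assumes "finite_quotients P"
  shows "FC_unary_definable (wstar v \<inter> P)"
proof -
  define f where "f k = lquot (wpow v k) P" for k
  have "range f \<subseteq> range (\<lambda>u. lquot u P)" unfolding f_def by blast
  then have "finite (range f)" using assms unfolding finite_quotients_def by (rule finite_subset)
  moreover have "f (Suc k) = lquot v (f k)" for k
    unfolding f_def by (simp only: wpow_Suc_right lquot_append)
  ultimately obtain N c where "0 < c" and f_periodic: "\<And>k q. f (N + k + q * c) = f (N + k)"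
    by (rule iterate_eventually_periodic) blast
  have "wpow v k \<in> P \<longleftrightarrow> [] \<in> f k" for k unfolding f_def lquot_def by simp
  then have "wpow v (N + k + q * c) \<in> P \<longleftrightarrow> wpow v (N + k) \<in> P" for k q
    using f_periodic by simp
  note decomposition = wstar_Int_eventually_periodic[OF \<open>0 < c\<close> this]
  show ?thesis
    unfolding decomposition
    by (intro FC_unary_definable_Un FC_unary_definable_UN FC_unary_definable_conc
        FC_unary_definable_singleton FC_unary_definable_wstar) simp_all
qed

definition wstars :: "'a list list \<Rightarrow> 'a list set" where
  "wstars ws = foldr (\<lambda>u A. conc (wstar u) A) ws {[]}"

lemma wstars_Nil [simp]: "wstars [] = {[]}"
  by (simp add: wstars_def)

lemma wstars_Cons [simp]: "wstars (w # ws) = conc (wstar w) (wstars ws)"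
  by (simp add: wstars_def)

lemma FC_unary_definable_wstars_Int:
  "finite_quotients R \<Longrightarrow> FC_unary_definable (wstars vs \<inter> R)"
proof (induction vs arbitrary: R)
  case Nil
  have "wstars [] \<inter> R = {[]} \<or> wstars [] \<inter> R = {}" by auto
  then show ?case using FC_unary_definable_singleton FC_unary_definable_empty by metis
next
  case (Cons v vs)
  have "wstars (v # vs) \<inter> R =
      (\<Union>Q\<in>range (\<lambda>p. lquot p R). conc (wstar v \<inter> {p. lquot p R = Q}) (wstars vs \<inter> Q))"
    by (auto simp: conc_def lquot_def)
  moreover have "FC_unary_definable (conc (wstar v \<inter> {p. lquot p R = Q}) (wstars vs \<inter> Q))"
    if "Q \<in> range (\<lambda>p. lquot p R)" for Q
    using that Cons.prems
    by (auto intro!: FC_unary_definable_conc FC_unary_definable_wstar_Int Cons.IH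
        finite_quotients_lquot_eq finite_quotients_lquot)
  moreover have "finite (range (\<lambda>p. lquot p R))"
    using Cons.prems unfolding finite_quotients_def .
  ultimately show ?case by (simp only: FC_unary_definable_UN)
qed

section \<open>Factors of words in products of stars\<close>

lemma Nil_in_wstars: "[] \<in> wstars ws"
  by (induction ws) (auto simp: conc_def Nil_in_wstar)

lemma wstars_append: "wstars (ws @ vs) = conc (wstars ws) (wstars vs)"
  by (induction ws) (simp_all add: conc_assoc)

lemma in_wstars_if_in_set: "w \<in> set ws \<Longrightarrow> w \<in> wstars ws"
proof (induction ws)
  case (Cons v ws)
  show ?case
  proof (cases "w = v")
    case True
    have "v \<in> wstar v" unfolding wstar_iff by (auto intro: exI[of _ 1])
    then have "v @ [] \<in> conc (wstar v) (wstars ws)" using Nil_in_wstars by (rule concI)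
    then show ?thesis using True by simp
  next
    case False
    then have "[] @ w \<in> conc (wstar v) (wstars ws)" using Cons Nil_in_wstar by (intro concI) auto
    then show ?thesis by simp
  qed
qed simp

lemma prefix_wpow: "prefix p (wpow w k) \<Longrightarrow> \<exists>a q. prefix q w \<and> p = wpow w a @ q"
proof (induction k arbitrary: p)
  case 0
  then show ?case by (intro exI[of _ 0] exI[of _ "[]"]) simp
next
  case (Suc k)
  then consider "prefix p w" | us where "p = w @ us" "prefix us (wpow w k)"
    by (auto simp: prefix_append)
  then show ?case
  proof cases
    case 1
    then show ?thesis by (intro exI[of _ 0] exI[of _ p]) simp
  next
    case 2
    then obtain a q where "prefix q w" "us = wpow w a @ q" using Suc.IH by blast
    then show ?thesis using 2(1) by (intro exI[of _ "Suc a"] exI[of _ q]) simp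
  qed
qed

lemma suffix_wpow: "suffix s (wpow w k) \<Longrightarrow> \<exists>a q. suffix q w \<and> s = q @ wpow w a"
proof (induction k arbitrary: s)
  case 0
  then show ?case by (intro exI[of _ 0] exI[of _ "[]"]) simp
next
  case (Suc k)
  then consider "suffix s (wpow w k)" | s' where "s = s' @ wpow w k" "suffix s' w"
    by (auto simp: suffix_append)
  then show ?case
    using Suc.IH by cases blast+
qed

text \<open>A prefix of a word of \<open>w\<^sup>* B\<close> either ends inside a copy of w, and is then a power of w
  followed by a member of \<open>prefixes w\<close>, each of which gets its own starred block, or it is a
  power of w followed by a prefix of a word of B.\<close>
fun prefix_stars :: "'a list list \<Rightarrow> 'a list list" where
  "prefix_stars [] = []"
| "prefix_stars (w # ws) = w # prefixes w @ prefix_stars ws"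

fun suffix_stars :: "'a list list \<Rightarrow> 'a list list" where
  "suffix_stars [] = []"
| "suffix_stars (w # ws) = suffixes w @ w # suffix_stars ws"

lemma wstars_prefix_closed: "x \<in> wstars ws \<Longrightarrow> prefix p x \<Longrightarrow> p \<in> wstars (prefix_stars ws)"
proof (induction ws arbitrary: x p)
  case Nil
  then show ?case by simp
next
  case (Cons w ws)
  obtain k y where x: "x = wpow w k @ y" "y \<in> wstars ws"
    using Cons.prems(1) by (auto simp: conc_def wstar_iff)
  have stars: "wstars (prefix_stars (w # ws)) = conc (wstar w) (conc (wstars (prefixes w)) (wstars (prefix_stars ws)))"
    by (simp add: wstars_append)
  consider "prefix p (wpow w k)" | us where "p = wpow w k @ us" "prefix us y"
    using Cons.prems(2) x(1) by (auto simp: prefix_append)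
  then show ?case
  proof cases
    case 1
    then obtain a q where "prefix q w" "p = wpow w a @ q" using prefix_wpow by blast
    moreover have "wpow w a \<in> wstar w" "q \<in> wstars (prefixes w)"
      using \<open>prefix q w\<close> by (auto simp: wstar_iff intro: in_wstars_if_in_set)
    ultimately show ?thesis unfolding stars using Nil_in_wstars concI[of q _ "[]"] by (auto intro: concI)
  next
    case 2
    then have "us \<in> wstars (prefix_stars ws)" using Cons.IH x(2) by blast
    moreover have "wpow w k \<in> wstar w" by (auto simp: wstar_iff)
    ultimately show ?thesis unfolding stars using 2(1) Nil_in_wstars concI[of "[]" _ us] by (auto intro: concI)
  qed
qed

lemma wstars_suffix_closed: "x \<in> wstars ws \<Longrightarrow> suffix s x \<Longrightarrow> s \<in> wstars (suffix_stars ws)"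
proof (induction ws arbitrary: x s)
  case Nil
  then show ?case by simp
next
  case (Cons w ws)
  obtain k y where x: "x = wpow w k @ y" "y \<in> wstars ws"
    using Cons.prems(1) by (auto simp: conc_def wstar_iff)
  have stars: "wstars (suffix_stars (w # ws)) = conc (wstars (suffixes w)) (conc (wstar w) (wstars (suffix_stars ws)))"
    by (simp add: wstars_append)
  consider "suffix s y" | s' where "s = s' @ y" "suffix s' (wpow w k)"
    using Cons.prems(2) x(1) by (auto simp: suffix_append)
  then show ?case
  proof cases
    case 1
    then have "s \<in> wstars (suffix_stars ws)" using Cons.IH x(2) by blast
    then have "[] @ [] @ s \<in> wstars (suffix_stars (w # ws))"
      unfolding stars using Nil_in_wstars Nil_in_wstar by (intro concI)
    then show ?thesis by simp
  next
    case 2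
    then obtain a q where "suffix q w" "s = q @ wpow w a @ y" using suffix_wpow by fastforce
    moreover have "y \<in> wstars (suffix_stars ws)" using Cons.IH x(2) by blast
    moreover have "wpow w a \<in> wstar w" "q \<in> wstars (suffixes w)"
      using \<open>suffix q w\<close> by (auto simp: wstar_iff intro: in_wstars_if_in_set)
    ultimately show ?thesis unfolding stars by (auto intro: concI)
  qed
qed

lemma facs_subset_wstars: "w \<in> wstars ws \<Longrightarrow> facs w \<subseteq> wstars (suffix_stars (prefix_stars ws))"
proof
  fix u
  assume "w \<in> wstars ws" "u \<in> facs w"
  then obtain l r where "w = (l @ u) @ r" unfolding facs_def by auto
  then have "prefix (l @ u) w" "suffix u (l @ u)" unfolding prefix_def suffix_def by blast+
  then show "u \<in> wstars (suffix_stars (prefix_stars ws))"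
    using wstars_prefix_closed[OF \<open>w \<in> wstars ws\<close>] wstars_suffix_closed by blast
qed

section \<open>Eliminating regular constraints\<close>

definition equivalent_on :: "'a list set \<Rightarrow> 'a fcform \<Rightarrow> 'a fcform \<Rightarrow> bool" where
  "equivalent_on D \<phi> \<psi> \<longleftrightarrow> (\<forall>w \<sigma>. facs w \<subseteq> D \<longrightarrow> sat w \<sigma> \<phi> = sat w \<sigma> \<psi>)"

lemma eliminate_regular_constraints:
  assumes "\<And>r. FC_unary_definable (D \<inter> rlang r)"
  shows "\<exists>\<phi>'. pure_fc \<phi>' \<and> fv \<phi>' \<subseteq> fv \<phi> \<and> equivalent_on D \<phi>' \<phi>"
proof (induction \<phi>)
  case (Cat x y z)
  show ?case by (rule exI[of _ "Cat x y z"]) (simp add: equivalent_on_def)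
next
  case (Reg x r)
  obtain \<psi> where \<psi>: "fc_defines \<psi> x (D \<inter> rlang r)"
    using assms unfolding FC_unary_definable_def by blast
  let ?\<phi>' = "Conj (Cat (Var x) (Var x) Eps) \<psi>"
  have "equivalent_on D ?\<phi>' (Reg x r)"
    by (auto simp: equivalent_on_def fc_definesD[OF \<psi>])
  moreover have "pure_fc ?\<phi>'" "fv ?\<phi>' \<subseteq> fv (Reg x r)" using \<psi> by (auto simp: fc_defines_def)
  ultimately show ?case by blast
next
  case (Neg \<phi>)
  then obtain \<phi>' where "pure_fc \<phi>' \<and> fv \<phi>' \<subseteq> fv \<phi> \<and> equivalent_on D \<phi>' \<phi>" ..
  then show ?case by (intro exI[of _ "Neg \<phi>'"]) (auto simp: equivalent_on_def)
next
  case (Conj \<phi> \<chi>)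
  then obtain \<phi>' \<chi>' where
    "pure_fc \<phi>' \<and> fv \<phi>' \<subseteq> fv \<phi> \<and> equivalent_on D \<phi>' \<phi>"
    "pure_fc \<chi>' \<and> fv \<chi>' \<subseteq> fv \<chi> \<and> equivalent_on D \<chi>' \<chi>"
    by blast
  then show ?case by (intro exI[of _ "Conj \<phi>' \<chi>'"]) (auto simp: equivalent_on_def)
next
  case (Disj \<phi> \<chi>)
  then obtain \<phi>' \<chi>' where
    "pure_fc \<phi>' \<and> fv \<phi>' \<subseteq> fv \<phi> \<and> equivalent_on D \<phi>' \<phi>"
    "pure_fc \<chi>' \<and> fv \<chi>' \<subseteq> fv \<chi> \<and> equivalent_on D \<chi>' \<chi>"
    by blast
  then show ?case by (intro exI[of _ "Disj \<phi>' \<chi>'"]) (auto simp: equivalent_on_def)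
next
  case (Ex x \<phi>)
  then obtain \<phi>' where "pure_fc \<phi>' \<and> fv \<phi>' \<subseteq> fv \<phi> \<and> equivalent_on D \<phi>' \<phi>" ..
  then show ?case by (intro exI[of _ "Ex x \<phi>'"]) (auto simp: equivalent_on_def)
next
  case (All x \<phi>)
  then obtain \<phi>' where "pure_fc \<phi>' \<and> fv \<phi>' \<subseteq> fv \<phi> \<and> equivalent_on D \<phi>' \<phi>" ..
  then show ?case by (intro exI[of _ "All x \<phi>'"]) (auto simp: equivalent_on_def)
qed

text \<open>Variable 0 holds the whole word iff every factor (variable 1) occurs in it
  as \<open>x\<^sub>0 = (x\<^sub>3 x\<^sub>1) x\<^sub>4\<close>; taking \<open>x\<^sub>1\<close> to be the word itself forces \<open>x\<^sub>0\<close> to be that long.\<close>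
definition whole_word_fm :: "'a fcform" where
  "whole_word_fm = All 1 (Ex 2 (Ex 3 (Ex 4
     (Conj (Cat (Var 2) (Var 3) (Var 1)) (Cat (Var 0) (Var 2) (Var 4))))))"

lemma sat_whole_word_fm:
  assumes "\<sigma> 0 = Some u" "u \<in> facs w"
  shows "sat w \<sigma> whole_word_fm \<longleftrightarrow> u = w"
proof -
  have "sat w \<sigma> whole_word_fm \<longleftrightarrow> (\<forall>y\<in>facs w. \<exists>p\<in>facs w. \<exists>q\<in>facs w. \<exists>r\<in>facs w. p = q @ y \<and> u = p @ r)"
    using assms by (simp add: whole_word_fm_def)
  also have "\<dots> \<longleftrightarrow> u = w"
  proof
    assume "\<forall>y\<in>facs w. \<exists>p\<in>facs w. \<exists>q\<in>facs w. \<exists>r\<in>facs w. p = q @ y \<and> u = p @ r"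
    then have "length w \<le> length u" using facs_self by fastforce
    moreover obtain l r where "w = l @ u @ r" using assms(2) unfolding facs_def by blast
    ultimately show "u = w" by simp
  next
    assume "u = w"
    show "\<forall>y\<in>facs w. \<exists>p\<in>facs w. \<exists>q\<in>facs w. \<exists>r\<in>facs w. p = q @ y \<and> u = p @ r"
    proof
      fix y
      assume "y \<in> facs w"
      then obtain q r where w: "w = (q @ y) @ r" unfolding facs_def by auto
      then have "q @ y \<in> facs w" "q \<in> facs w" "r \<in> facs w"
        using facs_self[of w] facs_appendD by metis+
      then show "\<exists>p\<in>facs w. \<exists>q\<in>facs w. \<exists>r\<in>facs w. p = q @ y \<and> u = p @ r"
        using w \<open>u = w\<close> by blast
    qed
  qed
  finally show ?thesis .
qed

lemma FC_definable_if_FC_unary_definable: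
  assumes "FC_unary_definable L"
  shows "FC_definable L"
proof -
  obtain \<psi> where \<psi>: "fc_defines \<psi> 0 L" using assms unfolding FC_unary_definable_def by blast
  let ?\<Phi> = "Ex 0 (Conj whole_word_fm \<psi>)"
  have "sat w (\<lambda>_. None) ?\<Phi> \<longleftrightarrow> w \<in> L" for w
    by (auto simp: sat_whole_word_fm fc_definesD[OF \<psi>])
  moreover have "fv ?\<Phi> = {}" "pure_fc ?\<Phi>"
    using \<psi> by (auto simp: fc_defines_def whole_word_fm_def)
  ultimately show ?thesis unfolding FC_definable_def flang_def by blast
qed

lemma flang_Conj: "flang (Conj \<phi> \<psi>) = flang \<phi> \<inter> flang \<psi>"
  unfolding flang_def by auto

lemma FC_definable_Int:
  assumes "FC_definable A" "FC_definable B"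
  shows "FC_definable (A \<inter> B)"
proof -
  obtain \<phi> \<psi> where "fv \<phi> = {}" "pure_fc \<phi>" "A = flang \<phi>" "fv \<psi> = {}" "pure_fc \<psi>" "B = flang \<psi>"
    using assms unfolding FC_definable_def by blast
  then have "fv (Conj \<phi> \<psi>) = {} \<and> pure_fc (Conj \<phi> \<psi>) \<and> A \<inter> B = flang (Conj \<phi> \<psi>)"
    by (simp add: flang_Conj)
  then show ?thesis unfolding FC_definable_def by blast
qed

lemma flang_Neg: "flang (Neg \<phi>) = - flang \<phi>"
  unfolding flang_def by auto

lemma FC_definable_Compl: "FC_definable L \<Longrightarrow> FC_definable (- L)"
  unfolding FC_definable_def by (metis flang_Neg fv.simps(3) pure_fc.simps(3))

lemma FCREG_definable_Compl: "FCREG_definable L \<Longrightarrow> FCREG_definable (- L)"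
  unfolding FCREG_definable_def by (metis flang_Neg fv.simps(3))

lemma FC_definable_if_bounded_FCREG_definable:
  assumes "bounded_lang L" "FCREG_definable L"
  shows "FC_definable L"
proof -
  obtain ws where L: "L \<subseteq> wstars ws" using assms(1) unfolding bounded_lang_def wstars_def by blast
  obtain \<phi> where \<phi>: "fv \<phi> = {}" "L = flang \<phi>" using assms(2) unfolding FCREG_definable_def by blast
  let ?D = "wstars (suffix_stars (prefix_stars ws))"
  have "FC_unary_definable (?D \<inter> rlang r)" for r
    using FC_unary_definable_wstars_Int finite_quotients_rlang by blast
  then obtain \<phi>' where \<phi>': "pure_fc \<phi>'" "fv \<phi>' \<subseteq> fv \<phi>" and agree: "equivalent_on ?D \<phi>' \<phi>"
    using eliminate_regular_constraints[of ?D \<phi>] by blast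
  have "L = wstars ws \<inter> flang \<phi>'"
    using L \<phi>(2) agree facs_subset_wstars unfolding flang_def equivalent_on_def by blast
  moreover have "FC_definable (wstars ws)"
    by (rule FC_definable_if_FC_unary_definable, induction ws)
      (simp_all add: FC_unary_definable_singleton FC_unary_definable_conc FC_unary_definable_wstar)
  moreover have "FC_definable (flang \<phi>')" using \<phi>' \<phi>(1) unfolding FC_definable_def by blast
  ultimately show ?thesis by (simp add: FC_definable_Int)
qed

lemma bounded_lang_subset: "bounded_lang A \<Longrightarrow> B \<subseteq> A \<Longrightarrow> bounded_lang B"
  unfolding bounded_lang_def by blast

lemma bounded_lang_Un:
  assumes "bounded_lang A" "bounded_lang B"
  shows "bounded_lang (A \<union> B)"
proof -
  obtain ws vs where "A \<subseteq> wstars ws" "B \<subseteq> wstars vs"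
    using assms unfolding bounded_lang_def wstars_def by blast
  moreover have "wstars ws \<subseteq> wstars (ws @ vs)" "wstars vs \<subseteq> wstars (ws @ vs)"
    using concI[OF _ Nil_in_wstars] concI[OF Nil_in_wstars] by (fastforce simp: wstars_append)+
  ultimately show ?thesis unfolding bounded_lang_def wstars_def by blast
qed

lemma bool_comb_bounded_cases: "bool_comb_bounded L \<Longrightarrow> bounded_lang L \<or> bounded_lang (- L)"
proof (induction rule: bool_comb_bounded.induct)
  case (union A B)
  then show ?case
    using bounded_lang_Un bounded_lang_subset[of "- A" "- (A \<union> B)"] bounded_lang_subset[of "- B" "- (A \<union> B)"]
    by blast
next
  case (inter A B)
  then show ?case
    using bounded_lang_Un[of "- A" "- B"] bounded_lang_subset[of A "A \<inter> B"] bounded_lang_subset[of B "A \<inter> B"]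
    by auto
qed auto

theorem lemma5p3:
  fixes L :: "('a::finite) list set"
  assumes "bool_comb_bounded L"
  shows "FC_definable L \<longleftrightarrow> FCREG_definable L"
proof
  assume "FC_definable L"
  then show "FCREG_definable L" unfolding FC_definable_def FCREG_definable_def by blast
next
  assume "FCREG_definable L"
  from bool_comb_bounded_cases[OF assms] show "FC_definable L"
  proof
    assume "bounded_lang L"
    then show ?thesis using \<open>FCREG_definable L\<close> FC_definable_if_bounded_FCREG_definable by blast
  next
    assume "bounded_lang (- L)"
    then have "FC_definable (- L)"
      using \<open>FCREG_definable L\<close> FCREG_definable_Compl FC_definable_if_bounded_FCREG_definable by blast
    then show ?thesis using FC_definable_Compl by fastforce
  qed
qed

end
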